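(* Let $I$ be an ideal in a Noetherian ring $A$ containing a regular element (non-zero-divisor) of $A$, and let $\tilde{I}=\bigcup_{n\ge0}(I^{n+1}:I^n)$ be the Ratliff–Rush ideal associated with $I$. Then $\tilde{I}\subset{}^*I$.
   Context: For an ideal $I$ of $A$, an element $b\in A$ is weakly subintegral over $I$ if there exist $q\in\mathbb{N}$ and elements $a_i\in I^i$ ($1\le i\le 2q+1$) such that $b^n+\sum_{i=1}^n\binom{n}{i}a_ib^{n-i}=0$ for all $n$ with $q+1\le n\le 2q+1$. The weak subintegral closure ${}^*I$ of $I$ is the set of elements of $A$ weakly subintegral over $I$. *)

theory Defs
  imports "HOL-Algebra.Algebra" "HOL-Algebra.Ideal_Product" "HOL-Algebra.Ring_Divisibility"
begin

primrec ideal_pow :: "('a, 'b) ring_scheme \<Rightarrow> 'a set \<Rightarrow> nat \<Rightarrow> 'a set" where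
  "ideal_pow R I 0 = carrier R"
| "ideal_pow R I (Suc n) = ideal_prod R I (ideal_pow R I n)"

definition regular_elem :: "('a, 'b) ring_scheme \<Rightarrow> 'a \<Rightarrow> bool" where
  "regular_elem R x \<longleftrightarrow> x \<in> carrier R \<and>
     (\<forall>y \<in> carrier R. x \<otimes>\<^bsub>R\<^esub> y = \<zero>\<^bsub>R\<^esub> \<longrightarrow> y = \<zero>\<^bsub>R\<^esub>)"

definition ratliff_rush :: "('a, 'b) ring_scheme \<Rightarrow> 'a set \<Rightarrow> 'a set" where
  "ratliff_rush R I = (\<Union>n. {x \<in> carrier R.
      \<forall>y \<in> ideal_pow R I n. x \<otimes>\<^bsub>R\<^esub> y \<in> ideal_pow R I (Suc n)})"

definition weakly_subintegral :: "('a, 'b) ring_scheme \<Rightarrow> 'a set \<Rightarrow> 'a \<Rightarrow> bool" where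
  "weakly_subintegral R I b \<longleftrightarrow> b \<in> carrier R \<and>
     (\<exists>(q::nat) (a::nat \<Rightarrow> 'a).
        (\<forall>i \<in> {1..2*q+1}. a i \<in> ideal_pow R I i) \<and>
        (\<forall>n \<in> {q+1..2*q+1}.
           b [^]\<^bsub>R\<^esub> n \<oplus>\<^bsub>R\<^esub>
             (\<Oplus>\<^bsub>R\<^esub> i \<in> {1..n}. [(n choose i)] \<cdot>\<^bsub>R\<^esub> (a i \<otimes>\<^bsub>R\<^esub> b [^]\<^bsub>R\<^esub> (n - i)))
           = \<zero>\<^bsub>R\<^esub>))"

definition weak_subintegral_closure :: "('a, 'b) ring_scheme \<Rightarrow> 'a set \<Rightarrow> 'a set" where
  "weak_subintegral_closure R I = {b \<in> carrier R. weakly_subintegral R I b}"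

end

(*
  If b I^k \<subseteq> I^(k+1), then b^n I^k \<subseteq> I^(n+k) for every n.  For a regular x \<in> I the
  Artin-Rees lemma for the principal ideal (x^k) turns b^n x^k \<in> I^(n+k) into
  b^n \<in> I^(n+k-c); a second Artin-Rees type argument, for the filtration
  I^m \<inter> (I^(m+k+1) : I^k), shows I^m \<inter> (I^(n+k) : I^k) \<subseteq> I^n for m large, so b^n \<in> I^n
  for all large n.  Both are instances of the stability of every filtration M_n \<subseteq> I^n with
  I M_n \<subseteq> M_(n+1), which is proved like Hilbert's basis theorem: writing elements of I^n as
  forms of degree n in generators of I, the lexicographic leading coefficients of the forms
  representing elements of M_n make up a monotone family of ideals, which is generated by
  finitely many members because R is Noetherian.  Finally, if b^n \<in> I^n for all n > q, then
  a_i = c_i b^i with integers c_i vanishing for i \<le> q and 1 + \<Sum> (n choose i) c_i = 0 for n > q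
  witness that b is weakly subintegral over I.
*)

theory Submission
  imports Defs "HOL-Library.List_Lexorder"
begin

section \<open>Ideal powers and colon ideals\<close>

definition ideal_colon :: "('a, 'b) ring_scheme \<Rightarrow> 'a set \<Rightarrow> 'a set \<Rightarrow> 'a set" where
  "ideal_colon R J K = {x \<in> carrier R. \<forall>y \<in> K. x \<otimes>\<^bsub>R\<^esub> y \<in> J}"

context cring
begin

lemma cring_idealI:
  assumes "S \<subseteq> carrier R" "\<zero> \<in> S" "\<And>a b. a \<in> S \<Longrightarrow> b \<in> S \<Longrightarrow> a \<oplus> b \<in> S"
    "\<And>a x. a \<in> S \<Longrightarrow> x \<in> carrier R \<Longrightarrow> x \<otimes> a \<in> S"
  shows "ideal S R"
proof (rule idealI[OF ring_axioms])
  show "subgroup S (add_monoid R)"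
  proof (rule add.subgroupI)
    show "\<ominus> a \<in> S" if "a \<in> S" for a
      using assms(4)[OF that, of "\<ominus> \<one>"] assms(1) that by (auto simp: l_minus)
  qed (use assms in auto)
  show "x \<otimes> a \<in> S" "a \<otimes> x \<in> S" if "a \<in> S" "x \<in> carrier R" for a x
    using assms(1,4) that by (auto simp: m_comm subset_iff)
qed

lemma ideal_prod_subset:
  assumes "ideal K R" and "\<And>i j. i \<in> I \<Longrightarrow> j \<in> J \<Longrightarrow> i \<otimes> j \<in> K"
  shows "I \<cdot> J \<subseteq> K"
proof
  fix s assume "s \<in> I \<cdot> J"
  then show "s \<in> K"
    by (induction s rule: ideal_prod.induct)
       (auto intro: assms(2) additive_subgroup.a_closed[OF ideal.axioms(1)[OF assms(1)]])
qed

lemma ideal_prod_mono: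
  assumes "ideal I' R" "ideal J' R" "I \<subseteq> I'" "J \<subseteq> J'"
  shows "I \<cdot> J \<subseteq> I' \<cdot> J'"
  by (rule ideal_prod_subset[OF ideal_prod_is_ideal[OF assms(1,2)]])
     (use assms(3,4) in \<open>auto intro: ideal_prod.prod\<close>)

lemma ideal_colon_is_ideal:
  assumes J: "ideal J R" and K: "K \<subseteq> carrier R"
  shows "ideal (ideal_colon R J K) R"
proof (rule cring_idealI)
  interpret J: ideal J R by (rule J)
  show "ideal_colon R J K \<subseteq> carrier R" by (auto simp: ideal_colon_def)
  show "\<zero> \<in> ideal_colon R J K" using K by (auto simp: ideal_colon_def subset_iff)
  show "a \<oplus> b \<in> ideal_colon R J K" if "a \<in> ideal_colon R J K" "b \<in> ideal_colon R J K" for a b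
  proof -
    have "(a \<oplus> b) \<otimes> y = a \<otimes> y \<oplus> b \<otimes> y" if "y \<in> K" "a \<in> carrier R" "b \<in> carrier R" for y
      using that K by (simp add: l_distr subset_iff)
    then show ?thesis using that by (auto simp: ideal_colon_def)
  qed
  show "x \<otimes> a \<in> ideal_colon R J K" if "a \<in> ideal_colon R J K" "x \<in> carrier R" for a x
  proof -
    have "x \<otimes> a \<otimes> y = x \<otimes> (a \<otimes> y)" if "y \<in> K" "a \<in> carrier R" for y
      using that K \<open>x \<in> carrier R\<close> by (simp add: m_assoc subset_iff)
    then show ?thesis using that J.I_l_closed by (auto simp: ideal_colon_def)
  qed
qed

lemma ideal_prod_subset_colon:
  assumes "ideal J R" "I \<subseteq> ideal_colon R J K"
  shows "I \<cdot> K \<subseteq> J"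
  by (rule ideal_prod_subset[OF assms(1)]) (use assms(2) in \<open>auto simp: ideal_colon_def\<close>)

lemma ideal_prod_colon_subset:
  assumes I: "ideal I R" and J: "ideal J R" and K: "K \<subseteq> carrier R"
  shows "I \<cdot> ideal_colon R J K \<subseteq> ideal_colon R (I \<cdot> J) K"
proof (rule ideal_prod_subset[OF ideal_colon_is_ideal[OF ideal_prod_is_ideal[OF I J] K]])
  fix i x assume i: "i \<in> I" and x: "x \<in> ideal_colon R J K"
  have "i \<otimes> x \<otimes> y \<in> I \<cdot> J" if "y \<in> K" for y
    using that x ideal.Icarr[OF I i] K
    by (auto simp: ideal_colon_def m_assoc subset_iff intro: ideal_prod.prod[OF i])
  then show "i \<otimes> x \<in> ideal_colon R (I \<cdot> J) K"
    using x ideal.Icarr[OF I i] by (auto simp: ideal_colon_def)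
qed

lemma ideal_prod_cgenideal_subset:
  assumes J: "ideal J R" and y: "y \<in> carrier R"
  shows "J \<cdot> (PIdl y) \<subseteq> J #> y"
proof
  fix s assume "s \<in> J \<cdot> (PIdl y)"
  then show "s \<in> J #> y"
  proof (induction s rule: ideal_prod.induct)
    case (prod j p)
    then obtain r where r: "r \<in> carrier R" "p = r \<otimes> y" by (auto simp: cgenideal_def)
    then have "j \<otimes> p = (j \<otimes> r) \<otimes> y" using ideal.Icarr[OF J prod(1)] y by (simp add: m_assoc)
    then show ?case using ideal.I_r_closed[OF J prod(1) r(1)] by (auto simp: r_coset_def)
  next
    case (sum s1 s2)
    then obtain a b where ab: "a \<in> J" "s1 = a \<otimes> y" "b \<in> J" "s2 = b \<otimes> y"
      by (auto simp: r_coset_def)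
    then have "s1 \<oplus> s2 = (a \<oplus> b) \<otimes> y" using ideal.Icarr[OF J] y by (simp add: l_distr)
    then show ?case
      using ab additive_subgroup.a_closed[OF ideal.axioms(1)[OF J]] by (auto simp: r_coset_def)
  qed
qed

lemma ideal_pow_is_ideal: "ideal I R \<Longrightarrow> ideal (ideal_pow R I n) R"
  by (induction n) (simp_all add: oneideal ideal_prod_is_ideal)

lemma ideal_pow_subset_carrier: "ideal I R \<Longrightarrow> ideal_pow R I n \<subseteq> carrier R"
  by (rule subsetI, rule ideal.Icarr[OF ideal_pow_is_ideal])

lemma ideal_pow_add:
  assumes "ideal I R"
  shows "ideal_pow R I (m + n) = ideal_pow R I m \<cdot> ideal_pow R I n"
proof (induction m)
  case 0
  show ?case
    using ideal_prod_one[OF ideal_pow_is_ideal[OF assms]]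
          ideal_prod_commute[OF ideal_pow_is_ideal[OF assms] oneideal] by simp
next
  case (Suc m)
  then show ?case
    using ideal_prod_assoc[OF assms ideal_pow_is_ideal[OF assms] ideal_pow_is_ideal[OF assms]]
    by simp
qed

lemma ideal_pow_mult_mem:
  "ideal I R \<Longrightarrow> a \<in> ideal_pow R I m \<Longrightarrow> b \<in> ideal_pow R I n \<Longrightarrow> a \<otimes> b \<in> ideal_pow R I (m + n)"
  by (simp add: ideal_pow_add ideal_prod.prod)

lemma ideal_pow_antimono:
  assumes "ideal I R" "m \<le> n"
  shows "ideal_pow R I n \<subseteq> ideal_pow R I m"
proof -
  have "ideal_pow R I (n - m) \<cdot> ideal_pow R I m \<subseteq> ideal_pow R I m"
    using ideal_prod_inter[OF ideal_pow_is_ideal[OF assms(1)] ideal_pow_is_ideal[OF assms(1)]]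
    by blast
  then show ?thesis using assms by (simp add: ideal_pow_add[symmetric])
qed

lemma nat_pow_mem_ideal_pow:
  assumes "ideal I R" "g \<in> I"
  shows "g [^] n \<in> ideal_pow R I n"
proof (induction n)
  case (Suc n)
  then have "g \<otimes> g [^] n \<in> ideal_pow R I (Suc n)"
    using ideal_prod.prod[OF assms(2)] by simp
  then show ?case using ideal.Icarr[OF assms] by (simp add: m_comm)
qed simp

lemma ideal_colon_pow_shift:
  assumes I: "ideal I R" and b: "b \<in> ideal_colon R (ideal_pow R I (Suc k)) (ideal_pow R I k)"
  shows "b \<in> ideal_colon R (ideal_pow R I (Suc (d + k))) (ideal_pow R I (d + k))"
proof -
  have bc: "b \<in> carrier R" using b by (simp add: ideal_colon_def)
  have "ideal_pow R I d \<cdot> ideal_pow R I k \<subseteq> ideal_colon R (ideal_pow R I (Suc (d + k))) {b}"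
  proof (rule ideal_prod_subset[OF ideal_colon_is_ideal[OF ideal_pow_is_ideal[OF I]]])
    fix i j assume i: "i \<in> ideal_pow R I d" and j: "j \<in> ideal_pow R I k"
    have ij: "i \<in> carrier R" "j \<in> carrier R" using i j ideal_pow_subset_carrier[OF I] by auto
    have "b \<otimes> j \<in> ideal_pow R I (Suc k)" using b j by (simp add: ideal_colon_def)
    from ideal_pow_mult_mem[OF I i this]
    have "i \<otimes> (b \<otimes> j) \<in> ideal_pow R I (Suc (d + k))" by simp
    then show "i \<otimes> j \<in> ideal_colon R (ideal_pow R I (Suc (d + k))) {b}"
      using ij bc by (simp add: ideal_colon_def m_ac)
  qed (use bc in simp)
  then have "y \<otimes> b \<in> ideal_pow R I (Suc (d + k))" if "y \<in> ideal_pow R I (d + k)" for y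
    using that by (auto simp: ideal_colon_def ideal_pow_add[OF I])
  moreover have "y \<otimes> b = b \<otimes> y" if "y \<in> ideal_pow R I (d + k)" for y
    using that bc ideal_pow_subset_carrier[OF I] by (auto intro: m_comm)
  ultimately show ?thesis using bc by (simp add: ideal_colon_def)
qed

lemma ideal_colon_nat_pow:
  assumes I: "ideal I R" and b: "b \<in> ideal_colon R (ideal_pow R I (Suc k)) (ideal_pow R I k)"
  shows "b [^] n \<in> ideal_colon R (ideal_pow R I (k + n)) (ideal_pow R I k)"
proof (induction n)
  case 0
  then show ?case using ideal_pow_subset_carrier[OF I] by (auto simp: ideal_colon_def subset_iff)
next
  case (Suc n)
  have bc: "b \<in> carrier R" using b by (simp add: ideal_colon_def)
  have "b [^] Suc n \<otimes> y \<in> ideal_pow R I (k + Suc n)" if y: "y \<in> ideal_pow R I k" for y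
  proof -
    have yc: "y \<in> carrier R" using y ideal_pow_subset_carrier[OF I] by auto
    have "b [^] n \<otimes> y \<in> ideal_pow R I (n + k)" using Suc.IH y by (simp add: ideal_colon_def add.commute)
    then have "b \<otimes> (b [^] n \<otimes> y) \<in> ideal_pow R I (Suc (n + k))"
      using ideal_colon_pow_shift[OF I b, of n] by (simp add: ideal_colon_def)
    then show ?thesis using bc yc by (simp add: m_ac nat_pow_Suc2 add.commute)
  qed
  then show ?case using bc by (simp add: ideal_colon_def)
qed

lemma regular_elem_nat_pow:
  assumes x: "regular_elem R x"
  shows "regular_elem R (x [^] (k::nat))"
proof (induction k)
  case (Suc k)
  have xc: "x \<in> carrier R" using x by (simp add: regular_elem_def)
  have "y = \<zero>" if "y \<in> carrier R" "x [^] Suc k \<otimes> y = \<zero>" for y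
  proof -
    have "x [^] k \<otimes> (x \<otimes> y) = \<zero>" using that xc by (simp add: m_assoc)
    then have "x \<otimes> y = \<zero>" using Suc that(1) xc by (simp add: regular_elem_def)
    then show ?thesis using x that(1) by (simp add: regular_elem_def)
  qed
  then show ?case using xc by (simp add: regular_elem_def)
qed (simp add: regular_elem_def)

lemma regular_elem_cancel:
  assumes "regular_elem R x" "a \<in> carrier R" "b \<in> carrier R" "x \<otimes> a = x \<otimes> b"
  shows "a = b"
proof -
  have x: "x \<in> carrier R" using assms(1) by (simp add: regular_elem_def)
  have "x \<otimes> (a \<ominus> b) = \<zero>" using assms x by (simp add: a_minus_def r_distr r_minus r_neg)
  then have "a \<ominus> b = \<zero>" using assms(1-3) by (simp add: regular_elem_def)
  then show ?thesis using assms(2,3) by (simp add: r_right_minus_eq)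
qed

end

section \<open>Monotone families of ideals indexed by exponent vectors\<close>

definition finite_basis :: "('a, 'b) ring_scheme \<Rightarrow> nat \<Rightarrow> (nat list \<Rightarrow> 'a set) \<Rightarrow> nat list set \<Rightarrow> bool"
  where "finite_basis R r L F \<longleftrightarrow> finite F \<and> (\<forall>\<gamma> \<in> F. length \<gamma> = r) \<and>
    (\<forall>\<beta>. length \<beta> = r \<longrightarrow> L \<beta> \<subseteq> Idl\<^bsub>R\<^esub> (\<Union>\<gamma> \<in> {\<gamma> \<in> F. list_all2 (\<le>) \<gamma> \<beta>}. L \<gamma>))"

lemma (in noetherian_ring) ascending_chain_bounded:
  assumes "\<And>k. ideal (L k) R" "\<And>k. L k \<subseteq> L (Suc k)"
  shows "\<exists>K. \<forall>k. L k \<subseteq> L K"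
proof -
  have "subset.chain {I. ideal I R} (range L)"
    unfolding subset_chain_def
    using assms(1) lift_Suc_mono_le[of L, OF assms(2)] nat_le_linear by blast
  then have "\<Union>(range L) \<in> range L"
    by (intro ideal_chain_is_trivial) auto
  then show ?thesis by blast
qed

lemma (in ring) Idl_Union_image_mono:
  assumes "\<Union>(L ` B) \<subseteq> carrier R" "\<And>a. a \<in> A \<Longrightarrow> \<exists>b \<in> B. L' a \<subseteq> L b"
  shows "Idl (\<Union>(L' ` A)) \<subseteq> Idl (\<Union>(L ` B))"
  using assms by (intro subset_Idl_subset) blast+

(* Indices whose first coordinate is at least K0 are covered by the stabilised family
   L (K \<beta> # \<beta>), the remaining ones by the finitely many slices L (k # \<beta>) with k < K0. *)
lemma (in ring) finite_basis_Cons: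
  assumes ideal: "\<And>\<beta>. length \<beta> = Suc r \<Longrightarrow> ideal (L \<beta>) R"
    and mono: "\<And>\<alpha> \<beta>. length \<alpha> = Suc r \<Longrightarrow> list_all2 (\<le>) \<alpha> \<beta> \<Longrightarrow> L \<alpha> \<subseteq> L \<beta>"
    and K: "\<And>\<beta> k. length \<beta> = r \<Longrightarrow> L (k # \<beta>) \<subseteq> L (K \<beta> # \<beta>)"
    and Fi: "finite_basis R r (\<lambda>\<beta>. L (K \<beta> # \<beta>)) Fi" and K0: "\<And>\<gamma>. \<gamma> \<in> Fi \<Longrightarrow> K \<gamma> \<le> K0"
    and Fs: "\<And>k. finite_basis R r (\<lambda>\<beta>. L (k # \<beta>)) (Fs k)"
  shows "finite_basis R (Suc r) L ((\<lambda>\<gamma>. K0 # \<gamma>) ` Fi \<union> (\<Union>k<K0. (\<lambda>\<gamma>. k # \<gamma>) ` Fs k))"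
    (is "finite_basis R (Suc r) L ?F")
proof -
  have F_length: "\<forall>\<gamma> \<in> ?F. length \<gamma> = Suc r"
    using Fi Fs by (auto simp: finite_basis_def)
  have "L \<beta> \<subseteq> Idl (\<Union>\<gamma> \<in> {\<gamma> \<in> ?F. list_all2 (\<le>) \<gamma> \<beta>}. L \<gamma>)"
    if \<beta>_length: "length \<beta> = Suc r" for \<beta>
  proof -
    obtain k \<beta>' where \<beta>: "\<beta> = k # \<beta>'" "length \<beta>' = r"
      using \<beta>_length by (cases \<beta>) auto
    have carrier: "(\<Union>\<gamma> \<in> {\<gamma> \<in> ?F. list_all2 (\<le>) \<gamma> \<beta>}. L \<gamma>) \<subseteq> carrier R"
    proof (intro UN_least subsetI)
      fix \<gamma> x assume "\<gamma> \<in> {\<gamma> \<in> ?F. list_all2 (\<le>) \<gamma> \<beta>}" "x \<in> L \<gamma>"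
      then show "x \<in> carrier R" using F_length ideal.Icarr[OF ideal[of \<gamma>]] by simp
    qed
    show ?thesis
    proof (cases "K0 \<le> k")
      case True
      have "L \<beta> \<subseteq> L (K \<beta>' # \<beta>')" using K \<beta> by simp
      also have "\<dots> \<subseteq> Idl (\<Union>\<gamma> \<in> {\<gamma> \<in> Fi. list_all2 (\<le>) \<gamma> \<beta>'}. L (K \<gamma> # \<gamma>))"
        using Fi \<beta>(2) by (simp add: finite_basis_def)
      also have "\<dots> \<subseteq> Idl (\<Union>\<gamma> \<in> {\<gamma> \<in> ?F. list_all2 (\<le>) \<gamma> \<beta>}. L \<gamma>)"
      proof (rule Idl_Union_image_mono[OF carrier])
        fix \<gamma> assume \<gamma>: "\<gamma> \<in> {\<gamma> \<in> Fi. list_all2 (\<le>) \<gamma> \<beta>'}"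
        then have "K0 # \<gamma> \<in> {\<gamma> \<in> ?F. list_all2 (\<le>) \<gamma> \<beta>}" using True \<beta>(1) by auto
        moreover have "L (K \<gamma> # \<gamma>) \<subseteq> L (K0 # \<gamma>)"
          using mono K0 \<gamma> Fi by (simp add: list_all2_refl finite_basis_def)
        ultimately show "\<exists>\<gamma>' \<in> {\<gamma> \<in> ?F. list_all2 (\<le>) \<gamma> \<beta>}. L (K \<gamma> # \<gamma>) \<subseteq> L \<gamma>'" by blast
      qed
      finally show ?thesis .
    next
      case False
      have "L \<beta> \<subseteq> Idl (\<Union>\<gamma> \<in> {\<gamma> \<in> Fs k. list_all2 (\<le>) \<gamma> \<beta>'}. L (k # \<gamma>))"
        using Fs[of k] \<beta> by (simp add: finite_basis_def)
      also have "\<dots> \<subseteq> Idl (\<Union>\<gamma> \<in> {\<gamma> \<in> ?F. list_all2 (\<le>) \<gamma> \<beta>}. L \<gamma>)"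
      proof (rule Idl_Union_image_mono[OF carrier])
        fix \<gamma> assume "\<gamma> \<in> {\<gamma> \<in> Fs k. list_all2 (\<le>) \<gamma> \<beta>'}"
        then have "k # \<gamma> \<in> {\<gamma> \<in> ?F. list_all2 (\<le>) \<gamma> \<beta>}" using False \<beta>(1) by auto
        then show "\<exists>\<gamma>' \<in> {\<gamma> \<in> ?F. list_all2 (\<le>) \<gamma> \<beta>}. L (k # \<gamma>) \<subseteq> L \<gamma>'" by blast
      qed
      finally show ?thesis .
    qed
  qed
  moreover have "finite ?F" using Fi Fs by (auto simp: finite_basis_def)
  ultimately show ?thesis using F_length by (simp add: finite_basis_def)
qed

lemma (in noetherian_ring) monotone_ideal_family_finite_basis:
  fixes L :: "nat list \<Rightarrow> 'a set"
  assumes "\<And>\<beta>. length \<beta> = r \<Longrightarrow> ideal (L \<beta>) R"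
    and "\<And>\<alpha> \<beta>. length \<alpha> = r \<Longrightarrow> list_all2 (\<le>) \<alpha> \<beta> \<Longrightarrow> L \<alpha> \<subseteq> L \<beta>"
  shows "\<exists>F. finite_basis R r L F"
  using assms
proof (induction r arbitrary: L)
  case 0
  have "L [] \<subseteq> Idl (L [])"
    using 0(1) by (intro genideal_self) (simp add: ideal.Icarr subsetI)
  then show ?case by (intro exI[of _ "{[]}"]) (auto simp: finite_basis_def)
next
  case (Suc r)
  have "\<exists>K. \<forall>k. L (k # \<beta>) \<subseteq> L (K # \<beta>)" if "length \<beta> = r" for \<beta>
    using ascending_chain_bounded[of "\<lambda>k. L (k # \<beta>)"] that Suc.prems
    by (simp add: list_all2_refl)
  then have "\<forall>\<beta>. \<exists>K. length \<beta> = r \<longrightarrow> (\<forall>k. L (k # \<beta>) \<subseteq> L (K # \<beta>))" by blast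
  from choice[OF this]
  obtain K where "\<forall>\<beta>. length \<beta> = r \<longrightarrow> (\<forall>k. L (k # \<beta>) \<subseteq> L (K \<beta> # \<beta>))"
    by blast
  then have K: "\<And>\<beta> k. length \<beta> = r \<Longrightarrow> L (k # \<beta>) \<subseteq> L (K \<beta> # \<beta>)" by blast
  have "\<exists>Fi. finite_basis R r (\<lambda>\<beta>. L (K \<beta> # \<beta>)) Fi"
  proof (rule Suc.IH)
    show "L (K \<alpha> # \<alpha>) \<subseteq> L (K \<beta> # \<beta>)" if "length \<alpha> = r" "list_all2 (\<le>) \<alpha> \<beta>" for \<alpha> \<beta>
      using Suc.prems(2)[of "K \<alpha> # \<alpha>" "K \<alpha> # \<beta>"] K[of \<beta> "K \<alpha>"] that
            list_all2_lengthD[OF that(2)]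
      by auto
  qed (use Suc.prems in auto)
  then obtain Fi where Fi: "finite_basis R r (\<lambda>\<beta>. L (K \<beta> # \<beta>)) Fi" by blast
  have "\<forall>k. \<exists>F. finite_basis R r (\<lambda>\<beta>. L (k # \<beta>)) F"
    by (intro allI Suc.IH) (use Suc.prems in auto)
  from choice[OF this] obtain Fs where Fs: "\<And>k. finite_basis R r (\<lambda>\<beta>. L (k # \<beta>)) (Fs k)"
    by blast
  have "K \<gamma> \<le> Max (insert 0 (K ` Fi))" if "\<gamma> \<in> Fi" for \<gamma>
    using Fi that by (simp add: finite_basis_def)
  then show ?case
    using finite_basis_Cons[OF Suc.prems K Fi _ Fs] by blast
qed

section \<open>Forms in the generators of an ideal\<close>

definition weak_compositions :: "nat \<Rightarrow> nat \<Rightarrow> nat list set" where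
  "weak_compositions r n = {\<alpha>. length \<alpha> = r \<and> sum_list \<alpha> = n}"

lemma finite_weak_compositions: "finite (weak_compositions r n)"
proof (rule finite_subset)
  show "weak_compositions r n \<subseteq> {xs. set xs \<subseteq> {0..n} \<and> length xs = r}"
    unfolding weak_compositions_def using member_le_sum_list by fastforce
qed (rule finite_lists_length_eq, simp)

lemma weak_compositions_0: "weak_compositions r 0 = {replicate r 0}"
  unfolding weak_compositions_def
  by (auto simp: replicate_length_same[symmetric] sum_list_eq_0_iff)

lemma sum_list_map2_plus:
  "length a = length d \<Longrightarrow> sum_list (map2 (+) a d) = sum_list a + (sum_list d :: nat)"
  by (induction a d rule: list_induct2) auto

lemma list_all2_le_map2_plus: "length a = length d \<Longrightarrow> list_all2 (\<le>) d (map2 (+) a (d :: nat list))"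
  by (induction a d rule: list_induct2) auto

lemma map2_minus_plus: "length a = length d \<Longrightarrow> map2 (-) (map2 (+) a d) d = (a :: nat list)"
  by (induction a d rule: list_induct2) auto

lemma map2_plus_minus: "list_all2 (\<le>) d b \<Longrightarrow> map2 (+) (map2 (-) b d) d = (b :: nat list)"
  by (induction d b rule: list_all2_induct) auto

lemma map2_plus_commute: "map2 (+) a b = map2 (+) b (a :: nat list)"
proof (induction a arbitrary: b)
  case (Cons x xs)
  then show ?case by (cases b) auto
qed simp

lemma length_map2_minus: "list_all2 (\<le>) d b \<Longrightarrow> length (map2 (-) b (d :: nat list)) = length b"
  by (induction d b rule: list_all2_induct) auto

lemma sum_list_map2_minus:
  "list_all2 (\<le>) d b \<Longrightarrow> sum_list (map2 (-) b d) = sum_list b - (sum_list d :: nat)"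
proof (induction d b rule: list_all2_induct)
  case (Cons x xs y ys)
  have "sum_list xs \<le> sum_list ys"
    using Cons.hyps(2) by (induction xs ys rule: list_all2_induct) auto
  then show ?case using Cons by simp
qed simp

lemma map2_plus_less_iff:
  "length a = length d \<Longrightarrow> length b = length d \<Longrightarrow>
   map2 (+) a d < map2 (+) b d \<longleftrightarrow> a < (b :: nat list)"
proof (induction a d arbitrary: b rule: list_induct2)
  case (Cons x xs y ys)
  then obtain z zs where "b = z # zs" "length zs = length ys" by (cases b) auto
  then show ?case using Cons.IH by (auto simp: list_less_def)
qed (simp add: list_less_def)

lemma map2_plus_mem_weak_compositions:
  "\<alpha> \<in> weak_compositions r n \<Longrightarrow> length \<delta> = r \<Longrightarrow>
   map2 (+) \<alpha> \<delta> \<in> weak_compositions r (n + sum_list \<delta>)"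
  unfolding weak_compositions_def by (auto simp: sum_list_map2_plus)

lemma map2_minus_mem_weak_compositions:
  "\<beta> \<in> weak_compositions r m \<Longrightarrow> list_all2 (\<le>) \<delta> \<beta> \<Longrightarrow>
   map2 (-) \<beta> \<delta> \<in> weak_compositions r (m - sum_list \<delta>)"
  unfolding weak_compositions_def
  using length_map2_minus[of \<delta> \<beta>] sum_list_map2_minus[of \<delta> \<beta>] by auto

fun monomial :: "('a, 'b) ring_scheme \<Rightarrow> 'a list \<Rightarrow> nat list \<Rightarrow> 'a" where
  "monomial R (g # gs) (a # as) = g [^]\<^bsub>R\<^esub> a \<otimes>\<^bsub>R\<^esub> monomial R gs as"
| "monomial R _ _ = \<one>\<^bsub>R\<^esub>"

(* A form of degree n in gs is given by a coefficient function on exponent vectors, of which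
   only the values on weak_compositions (length gs) n are used. *)
definition eval_form :: "('a, 'b) ring_scheme \<Rightarrow> 'a list \<Rightarrow> nat \<Rightarrow> (nat list \<Rightarrow> 'a) \<Rightarrow> 'a" where
  "eval_form R gs n f = (\<Oplus>\<^bsub>R\<^esub> \<alpha> \<in> weak_compositions (length gs) n. f \<alpha> \<otimes>\<^bsub>R\<^esub> monomial R gs \<alpha>)"

definition shift_coeffs :: "('a, 'b) ring_scheme \<Rightarrow> nat list \<Rightarrow> (nat list \<Rightarrow> 'a) \<Rightarrow> nat list \<Rightarrow> 'a" where
  "shift_coeffs R \<delta> f \<beta> = (if list_all2 (\<le>) \<delta> \<beta> then f (map2 (-) \<beta> \<delta>) else \<zero>\<^bsub>R\<^esub>)"

definition form_values :: "('a, 'b) ring_scheme \<Rightarrow> 'a list \<Rightarrow> nat \<Rightarrow> 'a set" where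
  "form_values R gs n = eval_form R gs n ` (weak_compositions (length gs) n \<rightarrow> carrier R)"

context cring
begin

lemma monomial_closed: "set gs \<subseteq> carrier R \<Longrightarrow> monomial R gs \<alpha> \<in> carrier R"
proof (induction gs arbitrary: \<alpha>)
  case (Cons g gs)
  then show ?case by (cases \<alpha>) auto
qed simp

lemma monomial_map2_plus:
  assumes "set gs \<subseteq> carrier R" "length \<alpha> = length gs" "length \<delta> = length gs"
  shows "monomial R gs (map2 (+) \<alpha> \<delta>) = monomial R gs \<alpha> \<otimes> monomial R gs \<delta>"
  using assms(2)[symmetric] trans[OF assms(2) assms(3)[symmetric]] assms(1)
proof (induction gs \<alpha> \<delta> rule: list_induct3)
  case (Cons g gs a \<alpha> d \<delta>)
  then show ?case
    using monomial_closed[of gs]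
    by (simp add: nat_pow_mult[symmetric] m_ac)
qed simp

lemma monomial_mem_ideal_pow:
  assumes "ideal I R" "set gs \<subseteq> I" "length \<alpha> = length gs"
  shows "monomial R gs \<alpha> \<in> ideal_pow R I (sum_list \<alpha>)"
  using assms(3)[symmetric] assms(2)
proof (induction gs \<alpha> rule: list_induct2)
  case (Cons g gs a \<alpha>)
  then show ?case
    using ideal_pow_mult_mem[OF assms(1) nat_pow_mem_ideal_pow[OF assms(1)]] by simp
qed simp

lemma monomial_replicate_0: "monomial R gs (replicate (length gs) 0) = \<one>"
  by (induction gs) auto

lemma monomial_unit_index:
  assumes "set gs \<subseteq> carrier R" "k < length gs"
  shows "monomial R gs ((replicate (length gs) 0)[k := 1]) = gs ! k"
  using assms
proof (induction gs arbitrary: k)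
  case (Cons g gs)
  then show ?case
    by (cases k) (auto simp: monomial_replicate_0 nth_mem subset_iff)
qed simp

lemma eval_form_closed:
  "set gs \<subseteq> carrier R \<Longrightarrow> f \<in> weak_compositions (length gs) n \<rightarrow> carrier R \<Longrightarrow>
   eval_form R gs n f \<in> carrier R"
  unfolding eval_form_def using monomial_closed by (intro finsum_closed) auto

lemma eval_form_cong:
  assumes "set gs \<subseteq> carrier R" "g \<in> weak_compositions (length gs) n \<rightarrow> carrier R"
    and "\<And>\<alpha>. \<alpha> \<in> weak_compositions (length gs) n \<Longrightarrow> f \<alpha> = g \<alpha>"
  shows "eval_form R gs n f = eval_form R gs n g"
  unfolding eval_form_def
  by (rule add.finprod_cong') (use assms monomial_closed in \<open>auto simp: Pi_iff\<close>)

lemma eval_form_add: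
  assumes gs: "set gs \<subseteq> carrier R"
    and f: "f \<in> weak_compositions (length gs) n \<rightarrow> carrier R"
    and g: "g \<in> weak_compositions (length gs) n \<rightarrow> carrier R"
  shows "eval_form R gs n (\<lambda>\<alpha>. f \<alpha> \<oplus> g \<alpha>) = eval_form R gs n f \<oplus> eval_form R gs n g"
proof -
  have "eval_form R gs n (\<lambda>\<alpha>. f \<alpha> \<oplus> g \<alpha>) =
        (\<Oplus>\<alpha> \<in> weak_compositions (length gs) n. f \<alpha> \<otimes> monomial R gs \<alpha> \<oplus> g \<alpha> \<otimes> monomial R gs \<alpha>)"
    unfolding eval_form_def
    by (rule add.finprod_cong') (use f g monomial_closed[OF gs] in \<open>auto simp: l_distr Pi_iff\<close>)
  also have "\<dots> = eval_form R gs n f \<oplus> eval_form R gs n g"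
    unfolding eval_form_def by (rule finsum_addf) (use f g monomial_closed[OF gs] in auto)
  finally show ?thesis .
qed

lemma eval_form_smult:
  assumes gs: "set gs \<subseteq> carrier R"
    and f: "f \<in> weak_compositions (length gs) n \<rightarrow> carrier R" and c: "c \<in> carrier R"
  shows "eval_form R gs n (\<lambda>\<alpha>. c \<otimes> f \<alpha>) = c \<otimes> eval_form R gs n f"
proof -
  have "eval_form R gs n (\<lambda>\<alpha>. c \<otimes> f \<alpha>) =
        (\<Oplus>\<alpha> \<in> weak_compositions (length gs) n. c \<otimes> (f \<alpha> \<otimes> monomial R gs \<alpha>))"
    unfolding eval_form_def
    by (rule add.finprod_cong') (use f c monomial_closed[OF gs] in \<open>auto simp: m_assoc Pi_iff\<close>)
  also have "\<dots> = c \<otimes> eval_form R gs n f"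
    unfolding eval_form_def
    by (rule finsum_rdistr[symmetric]) (use f c monomial_closed[OF gs] finite_weak_compositions in auto)
  finally show ?thesis .
qed

lemma eval_form_zero: "set gs \<subseteq> carrier R \<Longrightarrow> eval_form R gs n (\<lambda>\<alpha>. \<zero>) = \<zero>"
  unfolding eval_form_def using monomial_closed by (simp add: finsum_zero)

lemma eval_form_minus:
  assumes gs: "set gs \<subseteq> carrier R" and f: "f \<in> weak_compositions (length gs) n \<rightarrow> carrier R"
  shows "eval_form R gs n (\<lambda>\<alpha>. \<ominus> f \<alpha>) = \<ominus> eval_form R gs n f"
proof -
  have "eval_form R gs n (\<lambda>\<alpha>. \<ominus> f \<alpha>) = eval_form R gs n (\<lambda>\<alpha>. \<ominus> \<one> \<otimes> f \<alpha>)"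
    by (rule eval_form_cong[OF gs]) (use f in \<open>auto simp: l_minus Pi_iff\<close>)
  then show ?thesis
    using eval_form_smult[OF gs f, of "\<ominus> \<one>"] eval_form_closed[OF gs f] by (simp add: l_minus)
qed

lemma eval_form_diff:
  assumes gs: "set gs \<subseteq> carrier R"
    and f: "f \<in> weak_compositions (length gs) n \<rightarrow> carrier R"
    and g: "g \<in> weak_compositions (length gs) n \<rightarrow> carrier R"
  shows "eval_form R gs n (\<lambda>\<alpha>. f \<alpha> \<ominus> g \<alpha>) = eval_form R gs n f \<ominus> eval_form R gs n g"
  using eval_form_add[OF gs f, of "\<lambda>\<alpha>. \<ominus> g \<alpha>"] eval_form_minus[OF gs g] g
  by (simp add: a_minus_def Pi_iff)

lemma eval_form_eq_zero:
  assumes "set gs \<subseteq> carrier R" "\<forall>\<beta> \<in> weak_compositions (length gs) n. f \<beta> = \<zero>"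
  shows "eval_form R gs n f = \<zero>"
  using eval_form_cong[OF assms(1), of "\<lambda>\<beta>. \<zero>" n f] eval_form_zero[OF assms(1)] assms(2) by simp

lemma shift_coeffs_map2_plus:
  "length \<alpha> = length \<delta> \<Longrightarrow> shift_coeffs R \<delta> f (map2 (+) \<alpha> \<delta>) = f \<alpha>"
  unfolding shift_coeffs_def by (simp add: list_all2_le_map2_plus map2_minus_plus)

lemma shift_coeffs_closed:
  assumes "f \<in> weak_compositions r n \<rightarrow> carrier R" "length \<delta> = r"
  shows "shift_coeffs R \<delta> f \<in> weak_compositions r (n + sum_list \<delta>) \<rightarrow> carrier R"
  using assms map2_minus_mem_weak_compositions[of _ r "n + sum_list \<delta>" \<delta>]
  by (auto simp: shift_coeffs_def Pi_iff)

lemma eval_form_shift_coeffs: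
  assumes gs: "set gs \<subseteq> carrier R" and f: "f \<in> weak_compositions (length gs) n \<rightarrow> carrier R"
    and \<delta>: "length \<delta> = length gs"
  shows "eval_form R gs (n + sum_list \<delta>) (shift_coeffs R \<delta> f) = monomial R gs \<delta> \<otimes> eval_form R gs n f"
proof -
  let ?W = "weak_compositions (length gs)"
  let ?A = "(\<lambda>\<alpha>. map2 (+) \<alpha> \<delta>) ` ?W n"
  let ?t = "\<lambda>\<beta>. shift_coeffs R \<delta> f \<beta> \<otimes> monomial R gs \<beta>"
  have length: "length \<alpha> = length \<delta>" if "\<alpha> \<in> ?W n" for \<alpha>
    using that \<delta> by (simp add: weak_compositions_def)
  have A: "?A \<subseteq> ?W (n + sum_list \<delta>)"
    using map2_plus_mem_weak_compositions \<delta> by blast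
  have outside: "?t \<beta> = \<zero>" if "\<beta> \<in> ?W (n + sum_list \<delta>) - ?A" for \<beta>
  proof -
    have "\<not> list_all2 (\<le>) \<delta> \<beta>"
    proof
      assume le: "list_all2 (\<le>) \<delta> \<beta>"
      then have "map2 (-) \<beta> \<delta> \<in> ?W n"
        using map2_minus_mem_weak_compositions[OF _ le] that by fastforce
      then show False using that map2_plus_minus[OF le] by force
    qed
    then show ?thesis unfolding shift_coeffs_def using monomial_closed[OF gs] by simp
  qed
  have "eval_form R gs (n + sum_list \<delta>) (shift_coeffs R \<delta> f) = (\<Oplus>\<beta> \<in> ?A. ?t \<beta>)"
    unfolding eval_form_def
    by (rule add.finprod_mono_neutral_cong_right[OF finite_weak_compositions A outside])
       (use shift_coeffs_closed[OF f \<delta>] monomial_closed[OF gs] in auto)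
  also have "\<dots> = (\<Oplus>\<alpha> \<in> ?W n. ?t (map2 (+) \<alpha> \<delta>))"
  proof (rule finsum_reindex)
    show "?t \<in> ?A \<rightarrow> carrier R"
      using f monomial_closed[OF gs] length by (auto simp: shift_coeffs_map2_plus Pi_iff)
    show "inj_on (\<lambda>\<alpha>. map2 (+) \<alpha> \<delta>) (?W n)"
      by (rule inj_on_inverseI[where g = "\<lambda>\<beta>. map2 (-) \<beta> \<delta>"]) (simp add: length map2_minus_plus)
  qed
  also have "\<dots> = (\<Oplus>\<alpha> \<in> ?W n. monomial R gs \<delta> \<otimes> (f \<alpha> \<otimes> monomial R gs \<alpha>))"
  proof (rule add.finprod_cong')
    fix \<alpha> assume \<alpha>: "\<alpha> \<in> ?W n"
    then have "monomial R gs (map2 (+) \<alpha> \<delta>) = monomial R gs \<alpha> \<otimes> monomial R gs \<delta>"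
      using monomial_map2_plus[OF gs _ \<delta>] length \<delta> by simp
    then show "?t (map2 (+) \<alpha> \<delta>) = monomial R gs \<delta> \<otimes> (f \<alpha> \<otimes> monomial R gs \<alpha>)"
      using \<alpha> f monomial_closed[OF gs] length by (auto simp: shift_coeffs_map2_plus m_ac Pi_iff)
  qed (use f monomial_closed[OF gs] in auto)
  also have "\<dots> = monomial R gs \<delta> \<otimes> eval_form R gs n f"
    unfolding eval_form_def
    by (rule finsum_rdistr[symmetric]) (use f monomial_closed[OF gs] finite_weak_compositions in auto)
  finally show ?thesis .
qed

lemma form_values_is_ideal:
  assumes gs: "set gs \<subseteq> carrier R"
  shows "ideal (form_values R gs n) R"
proof (rule cring_idealI)
  show "form_values R gs n \<subseteq> carrier R"
    using eval_form_closed[OF gs] by (auto simp: form_values_def)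
  show "\<zero> \<in> form_values R gs n"
    unfolding form_values_def using eval_form_zero[OF gs]
    by (intro image_eqI[of _ _ "\<lambda>\<alpha>. \<zero>"]) auto
  show "a \<oplus> b \<in> form_values R gs n" if "a \<in> form_values R gs n" "b \<in> form_values R gs n" for a b
  proof -
    from that obtain f g where "f \<in> weak_compositions (length gs) n \<rightarrow> carrier R" "a = eval_form R gs n f"
      "g \<in> weak_compositions (length gs) n \<rightarrow> carrier R" "b = eval_form R gs n g"
      unfolding form_values_def by (elim imageE)
    then show ?thesis
      using eval_form_add[OF gs] unfolding form_values_def
      by (intro image_eqI[of _ _ "\<lambda>\<alpha>. f \<alpha> \<oplus> g \<alpha>"]) auto
  qed
  show "x \<otimes> a \<in> form_values R gs n" if "a \<in> form_values R gs n" "x \<in> carrier R" for a x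
  proof -
    from that obtain f where "f \<in> weak_compositions (length gs) n \<rightarrow> carrier R" "a = eval_form R gs n f"
      unfolding form_values_def by (elim imageE)
    then show ?thesis
      using eval_form_smult[OF gs] that(2) unfolding form_values_def
      by (intro image_eqI[of _ _ "\<lambda>\<alpha>. x \<otimes> f \<alpha>"]) auto
  qed
qed

lemma generator_mult_form_values:
  assumes gs: "set gs \<subseteq> carrier R" and g: "g \<in> set gs" and v: "v \<in> form_values R gs n"
  shows "g \<otimes> v \<in> form_values R gs (Suc n)"
proof -
  obtain k where k: "k < length gs" "g = gs ! k" using g by (metis in_set_conv_nth)
  define e where "e = (replicate (length gs) (0::nat))[k := 1]"
  have e: "length e = length gs" "sum_list e = 1" "monomial R gs e = g"
    using k monomial_unit_index[OF gs k(1)] by (simp_all add: e_def sum_list_update)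
  obtain f where f: "f \<in> weak_compositions (length gs) n \<rightarrow> carrier R" "v = eval_form R gs n f"
    using v unfolding form_values_def by (rule imageE)
  have "g \<otimes> v = eval_form R gs (Suc n) (shift_coeffs R e f)"
    using eval_form_shift_coeffs[OF gs f(1) e(1)] e f(2) by simp
  then show ?thesis
    unfolding form_values_def using shift_coeffs_closed[OF f(1) e(1)] e(2) by auto
qed

lemma ideal_pow_subset_form_values:
  assumes gs: "set gs \<subseteq> carrier R"
  shows "ideal_pow R (Idl (set gs)) n \<subseteq> form_values R gs n"
proof (induction n)
  case 0
  have "c = eval_form R gs 0 (\<lambda>\<alpha>. c)" if "c \<in> carrier R" for c
    using that unfolding eval_form_def weak_compositions_0 by (simp add: monomial_replicate_0)
  then show ?case unfolding form_values_def by (auto intro!: image_eqI)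
next
  case (Suc n)
  let ?I = "Idl (set gs)"
  have colon: "ideal (ideal_colon R (form_values R gs (Suc n)) (form_values R gs n)) R"
    using form_values_is_ideal[OF gs] ideal.Icarr
    by (intro ideal_colon_is_ideal) (auto intro: ideal.Icarr)
  have "?I \<subseteq> ideal_colon R (form_values R gs (Suc n)) (form_values R gs n)"
    using gs generator_mult_form_values[OF gs]
    by (intro genideal_minimal[OF colon]) (auto simp: ideal_colon_def)
  then have "?I \<cdot> form_values R gs n \<subseteq> form_values R gs (Suc n)"
    by (rule ideal_prod_subset_colon[OF form_values_is_ideal[OF gs]])
  moreover have "?I \<cdot> ideal_pow R ?I n \<subseteq> ?I \<cdot> form_values R gs n"
    using Suc.IH by (intro ideal_prod_mono genideal_ideal form_values_is_ideal gs) auto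
  ultimately show ?case by simp
qed

end

section \<open>Leading coefficients\<close>

definition forms_into :: "('a, 'b) ring_scheme \<Rightarrow> 'a list \<Rightarrow> 'a set \<Rightarrow> nat \<Rightarrow> (nat list \<Rightarrow> 'a) set" where
  "forms_into R gs J m =
     {f \<in> weak_compositions (length gs) m \<rightarrow> carrier R. eval_form R gs m f \<in> J}"

(* < is the lexicographic order on lists; on vectors of equal length it is compatible with
   addition (map2_plus_less_iff), so it serves as a monomial order. *)
definition vanishes_above :: "('a, 'b) ring_scheme \<Rightarrow> nat list \<Rightarrow> (nat list \<Rightarrow> 'a) \<Rightarrow> bool" where
  "vanishes_above R \<alpha> f \<longleftrightarrow>
     (\<forall>\<beta> \<in> weak_compositions (length \<alpha>) (sum_list \<alpha>). \<alpha> < \<beta> \<longrightarrow> f \<beta> = \<zero>\<^bsub>R\<^esub>)"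

definition leading_coeffs :: "('a, 'b) ring_scheme \<Rightarrow> 'a list \<Rightarrow> 'a set \<Rightarrow> nat list \<Rightarrow> 'a set" where
  "leading_coeffs R gs J \<alpha> =
     (\<lambda>f. f \<alpha>) ` {f \<in> forms_into R gs J (sum_list \<alpha>). vanishes_above R \<alpha> f}"

context cring
begin

lemma forms_into_add:
  assumes gs: "set gs \<subseteq> carrier R" and J: "ideal J R"
    and "f \<in> forms_into R gs J m" "g \<in> forms_into R gs J m"
  shows "(\<lambda>\<beta>. f \<beta> \<oplus> g \<beta>) \<in> forms_into R gs J m"
  using assms eval_form_add[OF gs] additive_subgroup.a_closed[OF ideal.axioms(1)[OF J]]
  by (auto simp: forms_into_def Pi_iff)

lemma forms_into_smult:
  assumes gs: "set gs \<subseteq> carrier R" and J: "ideal J R"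
    and "f \<in> forms_into R gs J m" "x \<in> carrier R"
  shows "(\<lambda>\<beta>. x \<otimes> f \<beta>) \<in> forms_into R gs J m"
  using assms eval_form_smult[OF gs] ideal.I_l_closed[OF J]
  by (auto simp: forms_into_def Pi_iff)

lemma forms_into_zero:
  assumes gs: "set gs \<subseteq> carrier R" and J: "ideal J R"
  shows "(\<lambda>\<beta>. \<zero>) \<in> forms_into R gs J m"
  using eval_form_zero[OF gs] additive_subgroup.zero_closed[OF ideal.axioms(1)[OF J]]
  by (auto simp: forms_into_def)

lemma forms_into_diff:
  assumes gs: "set gs \<subseteq> carrier R" and J: "ideal J R"
    and "f \<in> forms_into R gs J m" "g \<in> forms_into R gs J m"
  shows "(\<lambda>\<beta>. f \<beta> \<ominus> g \<beta>) \<in> forms_into R gs J m"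
  using assms eval_form_diff[OF gs] ideal.Icarr[OF J]
    additive_subgroup.a_closed[OF ideal.axioms(1)[OF J]]
    additive_subgroup.a_inv_closed[OF ideal.axioms(1)[OF J]]
  by (auto simp: forms_into_def Pi_iff a_minus_def)

lemma leading_coeffs_is_ideal:
  assumes gs: "set gs \<subseteq> carrier R" and J: "ideal J R" and \<alpha>: "length \<alpha> = length gs"
  shows "ideal (leading_coeffs R gs J \<alpha>) R"
proof (rule cring_idealI)
  let ?S = "{f \<in> forms_into R gs J (sum_list \<alpha>). vanishes_above R \<alpha> f}"
  have \<alpha>W: "\<alpha> \<in> weak_compositions (length gs) (sum_list \<alpha>)"
    using \<alpha> by (simp add: weak_compositions_def)
  show "leading_coeffs R gs J \<alpha> \<subseteq> carrier R"
    using \<alpha>W by (auto simp: leading_coeffs_def forms_into_def)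
  show "\<zero> \<in> leading_coeffs R gs J \<alpha>"
    unfolding leading_coeffs_def using forms_into_zero[OF gs J]
    by (intro image_eqI[of _ _ "\<lambda>\<beta>. \<zero>"]) (auto simp: vanishes_above_def)
  show "a \<oplus> b \<in> leading_coeffs R gs J \<alpha>"
    if "a \<in> leading_coeffs R gs J \<alpha>" "b \<in> leading_coeffs R gs J \<alpha>" for a b
  proof -
    from that obtain f g where "f \<in> ?S" "a = f \<alpha>" "g \<in> ?S" "b = g \<alpha>"
      unfolding leading_coeffs_def by (elim imageE)
    then show ?thesis
      unfolding leading_coeffs_def using forms_into_add[OF gs J]
      by (intro image_eqI[of _ _ "\<lambda>\<beta>. f \<beta> \<oplus> g \<beta>"]) (auto simp: vanishes_above_def)
  qed
  show "x \<otimes> a \<in> leading_coeffs R gs J \<alpha>" if "a \<in> leading_coeffs R gs J \<alpha>" "x \<in> carrier R" for a x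
  proof -
    from that obtain f where "f \<in> ?S" "a = f \<alpha>"
      unfolding leading_coeffs_def by (elim imageE)
    then show ?thesis
      unfolding leading_coeffs_def using forms_into_smult[OF gs J] that(2)
      by (intro image_eqI[of _ _ "\<lambda>\<beta>. x \<otimes> f \<beta>"]) (auto simp: vanishes_above_def)
  qed
qed

lemma vanishes_above_shift_coeffs:
  assumes "vanishes_above R \<alpha> f" "length \<alpha> = length \<delta>"
  shows "vanishes_above R (map2 (+) \<alpha> \<delta>) (shift_coeffs R \<delta> f)"
  unfolding vanishes_above_def
proof (intro ballI impI)
  fix \<beta> assume \<beta>: "\<beta> \<in> weak_compositions (length (map2 (+) \<alpha> \<delta>)) (sum_list (map2 (+) \<alpha> \<delta>))"
    and less: "map2 (+) \<alpha> \<delta> < \<beta>"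
  show "shift_coeffs R \<delta> f \<beta> = \<zero>"
  proof (cases "list_all2 (\<le>) \<delta> \<beta>")
    case True
    let ?\<beta>' = "map2 (-) \<beta> \<delta>"
    have \<beta>': "?\<beta>' \<in> weak_compositions (length \<alpha>) (sum_list \<alpha>)"
      using map2_minus_mem_weak_compositions[OF \<beta> True] assms(2)
      by (simp add: sum_list_map2_plus)
    then have "\<alpha> < ?\<beta>'"
      using less map2_plus_less_iff[of \<alpha> \<delta> ?\<beta>'] map2_plus_minus[OF True] assms(2)
      by (simp add: weak_compositions_def)
    then show ?thesis using assms(1) \<beta>' True by (simp add: vanishes_above_def shift_coeffs_def)
  qed (simp add: shift_coeffs_def)
qed

lemma leading_coeffs_shift:
  assumes gs: "set gs \<subseteq> carrier R" and c: "c \<in> leading_coeffs R gs J \<alpha>"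
    and \<alpha>: "length \<alpha> = length gs" and \<delta>: "length \<delta> = length gs"
    and J: "\<And>x. x \<in> J \<Longrightarrow> monomial R gs \<delta> \<otimes> x \<in> J'"
  shows "c \<in> leading_coeffs R gs J' (map2 (+) \<alpha> \<delta>)"
proof -
  obtain f where f: "f \<in> forms_into R gs J (sum_list \<alpha>)" "vanishes_above R \<alpha> f" "c = f \<alpha>"
    using c unfolding leading_coeffs_def by blast
  have sum: "sum_list (map2 (+) \<alpha> \<delta>) = sum_list \<alpha> + sum_list \<delta>"
    using \<alpha> \<delta> by (simp add: sum_list_map2_plus)
  have "shift_coeffs R \<delta> f \<in> forms_into R gs J' (sum_list (map2 (+) \<alpha> \<delta>))"
    using f(1) eval_form_shift_coeffs[OF gs _ \<delta>] shift_coeffs_closed[OF _ \<delta>] J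
    unfolding sum by (auto simp: forms_into_def)
  moreover have "vanishes_above R (map2 (+) \<alpha> \<delta>) (shift_coeffs R \<delta> f)"
    using vanishes_above_shift_coeffs[OF f(2)] \<alpha> \<delta> by simp
  moreover have "shift_coeffs R \<delta> f (map2 (+) \<alpha> \<delta>) = c"
    using shift_coeffs_map2_plus \<alpha> \<delta> f(3) by simp
  ultimately show ?thesis unfolding leading_coeffs_def by (auto intro!: image_eqI)
qed

lemma zero_or_leading_exponent:
  assumes "\<exists>\<beta> \<in> weak_compositions r m. f \<beta> \<noteq> \<zero>"
  obtains \<alpha> where "\<alpha> \<in> weak_compositions r m" "f \<alpha> \<noteq> \<zero>" "vanishes_above R \<alpha> f"
proof -
  let ?Z = "{\<beta> \<in> weak_compositions r m. f \<beta> \<noteq> \<zero>}"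
  have Z: "finite ?Z" "?Z \<noteq> {}" using assms finite_weak_compositions by auto
  have "Max ?Z \<in> ?Z" using Max_in[OF Z] .
  moreover have "vanishes_above R (Max ?Z) f"
    using \<open>Max ?Z \<in> ?Z\<close> Max_ge[OF Z(1)] unfolding vanishes_above_def weak_compositions_def
    by (auto simp: not_le[symmetric])
  ultimately show ?thesis using that by blast
qed

lemma leading_term_cancel:
  assumes gs: "set gs \<subseteq> carrier R" and J: "ideal J R" and J': "ideal J' R" "J' \<subseteq> J"
    and \<alpha>: "\<alpha> \<in> weak_compositions (length gs) m"
    and f: "f \<in> forms_into R gs J m" "vanishes_above R \<alpha> f"
    and lead: "f \<alpha> \<in> leading_coeffs R gs J' \<alpha>"
  obtains g where "g \<in> forms_into R gs J m"
    "\<And>\<beta>. \<beta> \<in> weak_compositions (length gs) m \<Longrightarrow> \<alpha> \<le> \<beta> \<Longrightarrow> g \<beta> = \<zero>"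
    "eval_form R gs m g \<in> J' \<Longrightarrow> eval_form R gs m f \<in> J'"
proof -
  let ?W = "weak_compositions (length gs) m"
  have sum: "sum_list \<alpha> = m" and W: "weak_compositions (length \<alpha>) (sum_list \<alpha>) = ?W"
    using \<alpha> by (auto simp: weak_compositions_def)
  obtain h where h: "h \<in> forms_into R gs J' m" "vanishes_above R \<alpha> h" "h \<alpha> = f \<alpha>"
    using lead unfolding leading_coeffs_def sum by (auto elim!: imageE)
  define g where "g = (\<lambda>\<beta>. f \<beta> \<ominus> h \<beta>)"
  have hJ: "h \<in> forms_into R gs J m" using h(1) J'(2) by (auto simp: forms_into_def)
  have fc: "f \<in> ?W \<rightarrow> carrier R" and hc: "h \<in> ?W \<rightarrow> carrier R"
    using f(1) hJ by (auto simp: forms_into_def)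
  show ?thesis
  proof (rule that)
    show "g \<in> forms_into R gs J m"
      unfolding g_def by (rule forms_into_diff[OF gs J f(1) hJ])
    show "g \<beta> = \<zero>" if "\<beta> \<in> ?W" "\<alpha> \<le> \<beta>" for \<beta>
      using that f(2) h(2) h(3) fc \<alpha> W
      by (cases "\<alpha> = \<beta>") (auto simp: g_def vanishes_above_def Pi_iff)
    assume "eval_form R gs m g \<in> J'"
    moreover have "eval_form R gs m h \<in> J'" using h(1) by (simp add: forms_into_def)
    ultimately have "eval_form R gs m g \<oplus> eval_form R gs m h \<in> J'"
      by (rule additive_subgroup.a_closed[OF ideal.axioms(1)[OF J'(1)]])
    then show "eval_form R gs m f \<in> J'"
      using eval_form_diff[OF gs fc hc] eval_form_closed[OF gs fc] eval_form_closed[OF gs hc]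
      by (simp add: g_def a_minus_def a_assoc l_neg)
  qed
qed

lemma eval_form_mem_by_leading_coeffs:
  assumes gs: "set gs \<subseteq> carrier R" and J: "ideal J R" and J': "ideal J' R" "J' \<subseteq> J"
    and lead: "\<And>\<alpha>. \<alpha> \<in> weak_compositions (length gs) m \<Longrightarrow>
                 leading_coeffs R gs J \<alpha> \<subseteq> leading_coeffs R gs J' \<alpha>"
    and f: "f \<in> forms_into R gs J m"
  shows "eval_form R gs m f \<in> J'"
proof -
  let ?W = "weak_compositions (length gs) m"
  have zero: "eval_form R gs m g \<in> J'" if "\<forall>\<beta> \<in> ?W. g \<beta> = \<zero>" for g
    using eval_form_eq_zero[OF gs that] additive_subgroup.zero_closed[OF ideal.axioms(1)[OF J'(1)]]
    by simp
  have below: "eval_form R gs m f \<in> J'"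
    if "\<alpha> \<in> ?W" "f \<in> forms_into R gs J m" "vanishes_above R \<alpha> f" for \<alpha> f
    using that
  proof (induction \<alpha> arbitrary: f rule: measure_induct_rule[of "\<lambda>\<alpha>. card {\<beta> \<in> ?W. \<beta> < \<alpha>}"])
    case (less \<alpha>)
    have "f \<alpha> \<in> leading_coeffs R gs J' \<alpha>"
      using lead[OF less.prems(1)] less.prems
      by (auto simp: leading_coeffs_def weak_compositions_def)
    then obtain g where g: "g \<in> forms_into R gs J m"
      "\<And>\<beta>. \<beta> \<in> ?W \<Longrightarrow> \<alpha> \<le> \<beta> \<Longrightarrow> g \<beta> = \<zero>"
      "eval_form R gs m g \<in> J' \<Longrightarrow> eval_form R gs m f \<in> J'"
      using leading_term_cancel[OF gs J J' less.prems] by blast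
    show ?case
    proof (cases "\<exists>\<beta> \<in> ?W. g \<beta> \<noteq> \<zero>")
      case True
      then obtain \<alpha>' where \<alpha>': "\<alpha>' \<in> ?W" "g \<alpha>' \<noteq> \<zero>" "vanishes_above R \<alpha>' g"
        by (rule zero_or_leading_exponent)
      have "\<alpha>' < \<alpha>" using g(2) \<alpha>' by (meson not_le)
      then have "{\<beta> \<in> ?W. \<beta> < \<alpha>'} \<subset> {\<beta> \<in> ?W. \<beta> < \<alpha>}"
        using \<alpha>'(1) by auto
      then have "card {\<beta> \<in> ?W. \<beta> < \<alpha>'} < card {\<beta> \<in> ?W. \<beta> < \<alpha>}"
        by (rule psubset_card_mono[OF finite_subset[OF _ finite_weak_compositions], rotated]) auto
      then show ?thesis using less.IH \<alpha>'(1,3) g(1,3) by blast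
    next
      case False
      then show ?thesis using zero g(3) by blast
    qed
  qed
  show ?thesis
  proof (cases "\<exists>\<beta> \<in> ?W. f \<beta> \<noteq> \<zero>")
    case True
    then obtain \<alpha> where "\<alpha> \<in> ?W" "vanishes_above R \<alpha> f" by (rule zero_or_leading_exponent)
    then show ?thesis using below f by blast
  next
    case False
    then show ?thesis using zero by blast
  qed
qed

end

section \<open>Stability of subfiltrations of the adic filtration\<close>

locale noetherian_cring = noetherian_ring R + cring R for R (structure)

locale adic_subfiltration = noetherian_cring +
  fixes I :: "'a set" and gs :: "'a list" and M :: "nat \<Rightarrow> 'a set"
  assumes generators: "set gs \<subseteq> carrier R" and I_generated: "I = Idl (set gs)"
    and M_ideal: "ideal (M n) R"
    and M_subset: "M n \<subseteq> ideal_pow R I n"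
    and M_step: "I \<cdot> M n \<subseteq> M (Suc n)"
begin

lemma I_ideal: "ideal I R"
  using genideal_ideal[OF generators] I_generated by simp

lemma ideal_pow_prod_M_subset: "ideal_pow R I j \<cdot> M m \<subseteq> M (m + j)"
proof (induction j)
  case 0
  then show ?case
    using ideal_prod_one[OF M_ideal] ideal_prod_commute[OF M_ideal oneideal] by simp
next
  case (Suc j)
  have "ideal_pow R I (Suc j) \<cdot> M m = I \<cdot> (ideal_pow R I j \<cdot> M m)"
    by (simp add: ideal_prod_assoc I_ideal ideal_pow_is_ideal M_ideal)
  also have "\<dots> \<subseteq> I \<cdot> M (m + j)"
    using Suc.IH by (rule ideal_prod_mono[OF I_ideal M_ideal order_refl])
  also have "\<dots> \<subseteq> M (m + Suc j)" using M_step by simp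
  finally show ?case .
qed

lemma monomial_mult_mem:
  assumes "length \<delta> = length gs" "x \<in> M m"
  shows "monomial R gs \<delta> \<otimes> x \<in> M (m + sum_list \<delta>)"
proof -
  have "monomial R gs \<delta> \<in> ideal_pow R I (sum_list \<delta>)"
    using monomial_mem_ideal_pow[OF I_ideal _ assms(1)] genideal_self[OF generators] I_generated
    by simp
  then have "monomial R gs \<delta> \<otimes> x \<in> ideal_pow R I (sum_list \<delta>) \<cdot> M m"
    using assms(2) by (rule ideal_prod.prod)
  then show ?thesis using ideal_pow_prod_M_subset by blast
qed

lemma monomial_mult_mem_prod:
  assumes "length \<delta> = length gs" "sum_list \<delta> = Suc j" "x \<in> M m"
  shows "monomial R gs \<delta> \<otimes> x \<in> I \<cdot> M (m + j)"
proof -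
  have "monomial R gs \<delta> \<in> I \<cdot> ideal_pow R I j"
    using monomial_mem_ideal_pow[OF I_ideal _ assms(1)] genideal_self[OF generators] I_generated
      assms(2) by simp
  then have "monomial R gs \<delta> \<otimes> x \<in> (I \<cdot> ideal_pow R I j) \<cdot> M m"
    using assms(3) by (rule ideal_prod.prod)
  also have "\<dots> = I \<cdot> (ideal_pow R I j \<cdot> M m)"
    by (simp add: ideal_prod_assoc I_ideal ideal_pow_is_ideal M_ideal)
  also have "\<dots> \<subseteq> I \<cdot> M (m + j)"
    using ideal_pow_prod_M_subset by (rule ideal_prod_mono[OF I_ideal M_ideal order_refl])
  finally show ?thesis .
qed

lemma leading_coeffs_mono:
  assumes "length \<alpha> = length gs" "list_all2 (\<le>) \<alpha> \<beta>"
  shows "leading_coeffs R gs (M (sum_list \<alpha>)) \<alpha> \<subseteq> leading_coeffs R gs (M (sum_list \<beta>)) \<beta>"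
proof
  fix c assume c: "c \<in> leading_coeffs R gs (M (sum_list \<alpha>)) \<alpha>"
  define \<delta> where "\<delta> = map2 (-) \<beta> \<alpha>"
  have \<delta>: "length \<delta> = length gs" "map2 (+) \<alpha> \<delta> = \<beta>"
    using assms length_map2_minus[OF assms(2)] map2_plus_minus[OF assms(2)] map2_plus_commute
    by (auto simp: \<delta>_def dest: list_all2_lengthD)
  have "sum_list \<beta> = sum_list \<alpha> + sum_list \<delta>"
    using \<delta> assms(1) by (metis sum_list_map2_plus)
  then show "c \<in> leading_coeffs R gs (M (sum_list \<beta>)) \<beta>"
    using leading_coeffs_shift[OF generators c assms(1) \<delta>(1)] monomial_mult_mem[OF \<delta>(1)] \<delta>(2)
    by simp
qed

lemma leading_coeffs_eventually_reducible:
  "\<exists>N. \<forall>n \<ge> N. \<forall>\<alpha> \<in> weak_compositions (length gs) (Suc n).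
     leading_coeffs R gs (M (Suc n)) \<alpha> \<subseteq> leading_coeffs R gs (I \<cdot> M n) \<alpha>"
proof -
  let ?L = "\<lambda>\<beta>. leading_coeffs R gs (M (sum_list \<beta>)) \<beta>"
  obtain F where "finite_basis R (length gs) ?L F"
    using monotone_ideal_family_finite_basis[of "length gs" ?L]
      leading_coeffs_is_ideal[OF generators M_ideal] leading_coeffs_mono
    by blast
  then have F: "finite F" "\<forall>\<gamma>\<in>F. length \<gamma> = length gs"
    "\<And>\<beta>. length \<beta> = length gs \<Longrightarrow> ?L \<beta> \<subseteq> Idl (\<Union>\<gamma> \<in> {\<gamma> \<in> F. list_all2 (\<le>) \<gamma> \<beta>}. ?L \<gamma>)"
    by (auto simp: finite_basis_def)
  define N where "N = Max (insert 0 (sum_list ` F))"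
  have "?L \<alpha> \<subseteq> leading_coeffs R gs (I \<cdot> M n) \<alpha>"
    if n: "N \<le> n" and \<alpha>: "\<alpha> \<in> weak_compositions (length gs) (Suc n)" for n \<alpha>
  proof -
    have \<alpha>': "length \<alpha> = length gs" "sum_list \<alpha> = Suc n"
      using \<alpha> by (auto simp: weak_compositions_def)
    have "(\<Union>\<gamma> \<in> {\<gamma> \<in> F. list_all2 (\<le>) \<gamma> \<alpha>}. ?L \<gamma>) \<subseteq> leading_coeffs R gs (I \<cdot> M n) \<alpha>"
    proof (intro UN_least subsetI)
      fix \<gamma> c assume \<gamma>: "\<gamma> \<in> {\<gamma> \<in> F. list_all2 (\<le>) \<gamma> \<alpha>}" and c: "c \<in> ?L \<gamma>"
      define \<delta> where "\<delta> = map2 (-) \<alpha> \<gamma>"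
      have \<gamma>': "length \<gamma> = length gs" "sum_list \<gamma> \<le> n"
        using F(1,2) \<gamma> n by (auto simp: N_def)
      have \<delta>: "length \<delta> = length gs" "map2 (+) \<gamma> \<delta> = \<alpha>"
        using \<gamma> \<alpha>' map2_plus_minus[of \<gamma> \<alpha>] map2_plus_commute
        by (auto simp: \<delta>_def dest: list_all2_lengthD)
      have "sum_list \<alpha> = sum_list \<gamma> + sum_list \<delta>"
        using \<delta> \<gamma>'(1) by (metis sum_list_map2_plus)
      then have "sum_list \<delta> = Suc (n - sum_list \<gamma>)" using \<alpha>'(2) \<gamma>'(2) by simp
      then have "monomial R gs \<delta> \<otimes> x \<in> I \<cdot> M n" if "x \<in> M (sum_list \<gamma>)" for x
        using monomial_mult_mem_prod[OF \<delta>(1) _ that] \<gamma>'(2) by simp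
      then show "c \<in> leading_coeffs R gs (I \<cdot> M n) \<alpha>"
        using leading_coeffs_shift[OF generators c \<gamma>'(1) \<delta>(1)] \<delta>(2) by simp
    qed
    then have "Idl (\<Union>\<gamma> \<in> {\<gamma> \<in> F. list_all2 (\<le>) \<gamma> \<alpha>}. ?L \<gamma>) \<subseteq> leading_coeffs R gs (I \<cdot> M n) \<alpha>"
      by (rule genideal_minimal[OF leading_coeffs_is_ideal[OF generators
                ideal_prod_is_ideal[OF I_ideal M_ideal] \<alpha>'(1)]])
    then show ?thesis using F(3)[OF \<alpha>'(1)] by blast
  qed
  then show ?thesis by (auto simp: weak_compositions_def)
qed

theorem eventually_stable: "\<exists>N. \<forall>n \<ge> N. M (Suc n) \<subseteq> I \<cdot> M n"
proof -
  obtain N where N: "\<And>n \<alpha>. N \<le> n \<Longrightarrow> \<alpha> \<in> weak_compositions (length gs) (Suc n) \<Longrightarrow>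
      leading_coeffs R gs (M (Suc n)) \<alpha> \<subseteq> leading_coeffs R gs (I \<cdot> M n) \<alpha>"
    using leading_coeffs_eventually_reducible by blast
  have "z \<in> I \<cdot> M n" if n: "N \<le> n" and z: "z \<in> M (Suc n)" for n z
  proof -
    obtain f where f: "f \<in> weak_compositions (length gs) (Suc n) \<rightarrow> carrier R"
      "z = eval_form R gs (Suc n) f"
      using z M_subset ideal_pow_subset_form_values[OF generators] I_generated
      unfolding form_values_def by blast
    then have "f \<in> forms_into R gs (M (Suc n)) (Suc n)"
      using z by (simp add: forms_into_def)
    then show ?thesis
      using eval_form_mem_by_leading_coeffs[OF generators M_ideal
              ideal_prod_is_ideal[OF I_ideal M_ideal] M_step N[OF n]] f(2)
      by simp
  qed
  then show ?thesis by blast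
qed

end

context noetherian_cring
begin

theorem adic_subfiltration_stable:
  assumes I: "ideal I R" and M: "\<And>n. ideal (M n) R" "\<And>n. M n \<subseteq> ideal_pow R I n"
    "\<And>n. I \<cdot> M n \<subseteq> M (Suc n)"
  shows "\<exists>N. \<forall>j. M (N + j) \<subseteq> ideal_pow R I j \<cdot> M N"
proof -
  obtain A where A: "A \<subseteq> carrier R" "finite A" "I = Idl A" using finetely_gen[OF I] by blast
  obtain gs where gs: "set gs = A" using finite_list[OF A(2)] by blast
  interpret adic_subfiltration R I gs M
    by (intro adic_subfiltration.intro noetherian_cring_axioms adic_subfiltration_axioms.intro)
       (use A gs M in auto)
  obtain N where N: "\<And>n. N \<le> n \<Longrightarrow> M (Suc n) \<subseteq> I \<cdot> M n"
    using eventually_stable by blast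
  have "M (N + j) \<subseteq> ideal_pow R I j \<cdot> M N" for j
  proof (induction j)
    case 0
    show ?case using ideal_prod_one[OF M(1)] ideal_prod_commute[OF M(1) oneideal] by simp
  next
    case (Suc j)
    have "M (N + Suc j) \<subseteq> I \<cdot> M (N + j)" using N by simp
    also have "\<dots> \<subseteq> I \<cdot> (ideal_pow R I j \<cdot> M N)"
      using Suc.IH by (rule ideal_prod_mono[OF I ideal_prod_is_ideal[OF ideal_pow_is_ideal[OF I] M(1)] order_refl])
    also have "\<dots> = ideal_pow R I (Suc j) \<cdot> M N"
      by (simp add: ideal_prod_assoc I ideal_pow_is_ideal M(1))
    finally show ?case .
  qed
  then show ?thesis by blast
qed

lemma adic_inter_filtration_stable:
  assumes I: "ideal I R" and J: "\<And>n. ideal (J n) R" and step: "\<And>n. I \<cdot> J n \<subseteq> J (Suc n)"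
  shows "\<exists>N. \<forall>j. ideal_pow R I (N + j) \<inter> J (N + j) \<subseteq> ideal_pow R I j \<cdot> (ideal_pow R I N \<inter> J N)"
proof (rule adic_subfiltration_stable[OF I])
  show "ideal (ideal_pow R I n \<inter> J n) R" for n
    by (rule i_intersect[OF ideal_pow_is_ideal[OF I] J])
  show "I \<cdot> (ideal_pow R I n \<inter> J n) \<subseteq> ideal_pow R I (Suc n) \<inter> J (Suc n)" for n
  proof -
    have "I \<cdot> (ideal_pow R I n \<inter> J n) \<subseteq> I \<cdot> ideal_pow R I n"
      by (rule ideal_prod_mono[OF I ideal_pow_is_ideal[OF I]]) auto
    moreover have "I \<cdot> (ideal_pow R I n \<inter> J n) \<subseteq> I \<cdot> J n"
      by (rule ideal_prod_mono[OF I J]) auto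
    ultimately show ?thesis using step by auto
  qed
qed auto

lemma artin_rees_principal:
  assumes I: "ideal I R" and y: "y \<in> carrier R"
  shows "\<exists>N. \<forall>j. ideal_pow R I (N + j) \<inter> PIdl y \<subseteq> ideal_pow R I j #> y"
proof -
  have "I \<cdot> (PIdl y) \<subseteq> PIdl y"
    using ideal_prod_inter[OF I cgenideal_ideal[OF y]] by blast
  then obtain N where N: "\<And>j. ideal_pow R I (N + j) \<inter> PIdl y \<subseteq>
      ideal_pow R I j \<cdot> (ideal_pow R I N \<inter> PIdl y)"
    using adic_inter_filtration_stable[OF I, of "\<lambda>_. PIdl y"] cgenideal_ideal[OF y] by blast
  have "ideal_pow R I j \<cdot> (ideal_pow R I N \<inter> PIdl y) \<subseteq> ideal_pow R I j \<cdot> (PIdl y)" for j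
    by (rule ideal_prod_mono[OF ideal_pow_is_ideal[OF I] cgenideal_ideal[OF y]]) auto
  then show ?thesis
    using N ideal_prod_cgenideal_subset[OF ideal_pow_is_ideal[OF I] y] by blast
qed

lemma ideal_pow_inter_colon_subset:
  assumes I: "ideal I R"
  shows "\<exists>N. \<forall>m \<ge> N + k. ideal_pow R I m \<inter> ideal_colon R (ideal_pow R I (m + k + 1)) (ideal_pow R I k)
                          \<subseteq> ideal_pow R I (Suc m)"
proof -
  define C where "C n = ideal_colon R (ideal_pow R I (n + k + 1)) (ideal_pow R I k)" for n
  define M where "M N = ideal_pow R I N \<inter> C N" for N
  have C_ideal: "ideal (C n) R" for n
    unfolding C_def by (intro ideal_colon_is_ideal ideal_pow_is_ideal ideal_pow_subset_carrier I)
  have "I \<cdot> C n \<subseteq> C (Suc n)" for n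
    using ideal_prod_colon_subset[OF I ideal_pow_is_ideal[OF I] ideal_pow_subset_carrier[OF I],
            of "n + k + 1" k]
    by (simp add: C_def)
  then obtain N where N: "\<And>j. ideal_pow R I (N + j) \<inter> C (N + j) \<subseteq> ideal_pow R I j \<cdot> M N"
    using adic_inter_filtration_stable[OF I, of C] C_ideal unfolding M_def by blast
  have M_ideal: "ideal (M N) R"
    unfolding M_def by (rule i_intersect[OF ideal_pow_is_ideal[OF I] C_ideal])
  have "M N \<cdot> ideal_pow R I k \<subseteq> ideal_pow R I (N + k + 1)"
    by (rule ideal_prod_subset_colon[OF ideal_pow_is_ideal[OF I]]) (auto simp: M_def C_def)
  then have MN: "ideal_pow R I k \<cdot> M N \<subseteq> ideal_pow R I (N + k + 1)"
    by (simp add: ideal_prod_commute M_ideal ideal_pow_is_ideal I)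
  have "ideal_pow R I m \<inter> C m \<subseteq> ideal_pow R I (Suc m)" if "N + k \<le> m" for m
  proof -
    obtain d where m: "m = N + (d + k)"
      using \<open>N + k \<le> m\<close> by (metis add.commute add.left_commute le_iff_add)
    have "ideal_pow R I m \<inter> C m \<subseteq> (ideal_pow R I d \<cdot> ideal_pow R I k) \<cdot> M N"
      using N[of "d + k"] m by (simp add: ideal_pow_add I)
    also have "\<dots> = ideal_pow R I d \<cdot> (ideal_pow R I k \<cdot> M N)"
      by (simp add: ideal_prod_assoc ideal_pow_is_ideal I M_ideal)
    also have "\<dots> \<subseteq> ideal_pow R I d \<cdot> ideal_pow R I (N + k + 1)"
      by (rule ideal_prod_mono[OF ideal_pow_is_ideal[OF I] ideal_pow_is_ideal[OF I] order_refl MN])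
    also have "\<dots> = ideal_pow R I (d + (N + k + 1))"
      by (rule ideal_pow_add[OF I, symmetric])
    also have "d + (N + k + 1) = Suc m" using m by simp
    finally show ?thesis .
  qed
  then show ?thesis unfolding C_def by blast
qed

lemma mem_ideal_pow_of_colon:
  assumes I: "ideal I R"
  shows "\<exists>N. \<forall>m n. N + k \<le> m \<longrightarrow> m \<le> n \<longrightarrow>
    ideal_pow R I m \<inter> ideal_colon R (ideal_pow R I (n + k)) (ideal_pow R I k) \<subseteq> ideal_pow R I n"
proof -
  obtain N where N: "\<And>m. N + k \<le> m \<Longrightarrow>
      ideal_pow R I m \<inter> ideal_colon R (ideal_pow R I (m + k + 1)) (ideal_pow R I k)
        \<subseteq> ideal_pow R I (Suc m)"
    using ideal_pow_inter_colon_subset[OF I, of k] by blast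
  have climb: "z \<in> ideal_pow R I (m + t)"
    if "N + k \<le> m" "m + t \<le> n" "z \<in> ideal_pow R I m"
      "z \<in> ideal_colon R (ideal_pow R I (n + k)) (ideal_pow R I k)" for m n t z
    using that(2)
  proof (induction t)
    case (Suc t)
    have "ideal_pow R I (n + k) \<subseteq> ideal_pow R I (m + t + k + 1)"
      using Suc.prems by (intro ideal_pow_antimono I) simp
    then have "z \<in> ideal_colon R (ideal_pow R I (m + t + k + 1)) (ideal_pow R I k)"
      using that(4) by (auto simp: ideal_colon_def)
    then show ?case using N[of "m + t"] Suc that(1) by auto
  qed (use that in simp)
  have "z \<in> ideal_pow R I n"
    if "N + k \<le> m" "m \<le> n" "z \<in> ideal_pow R I m"
      "z \<in> ideal_colon R (ideal_pow R I (n + k)) (ideal_pow R I k)" for m n z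
    using climb[of m "n - m" n z] that by simp
  then show ?thesis by blast
qed

lemma ratliff_rush_eventually_nat_pow:
  assumes I: "ideal I R" and x: "x \<in> I" "regular_elem R x"
    and b: "b \<in> ideal_colon R (ideal_pow R I (Suc k)) (ideal_pow R I k)"
  shows "\<exists>n0. \<forall>n \<ge> n0. b [^] n \<in> ideal_pow R I n"
proof -
  have bc: "b \<in> carrier R" using b by (simp add: ideal_colon_def)
  have xk: "x [^] k \<in> ideal_pow R I k" by (rule nat_pow_mem_ideal_pow[OF I x(1)])
  have xkc: "x [^] k \<in> carrier R" using ideal.Icarr[OF I x(1)] by simp
  obtain Na where Na: "\<And>j. ideal_pow R I (Na + j) \<inter> PIdl (x [^] k) \<subseteq> ideal_pow R I j #> x [^] k"
    using artin_rees_principal[OF I xkc] by blast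
  obtain Nh where Nh: "\<And>m n. Nh + k \<le> m \<Longrightarrow> m \<le> n \<Longrightarrow>
      ideal_pow R I m \<inter> ideal_colon R (ideal_pow R I (n + k)) (ideal_pow R I k) \<subseteq> ideal_pow R I n"
    using mem_ideal_pow_of_colon[OF I, of k] by blast
  have "b [^] n \<in> ideal_pow R I n" if n: "Na + Nh + k \<le> n" for n
  proof -
    have bn: "b [^] n \<in> ideal_colon R (ideal_pow R I (k + n)) (ideal_pow R I k)"
      by (rule ideal_colon_nat_pow[OF I b])
    have "b [^] n \<otimes> x [^] k \<in> ideal_pow R I (Na + (n + k - Na)) \<inter> PIdl (x [^] k)"
      using bn xk n bc by (auto simp: ideal_colon_def cgenideal_def add.commute)
    then obtain w where w: "w \<in> ideal_pow R I (n + k - Na)" "b [^] n \<otimes> x [^] k = w \<otimes> x [^] k"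
      using Na by (auto simp: r_coset_def)
    have wc: "w \<in> carrier R" using w(1) ideal_pow_subset_carrier[OF I] by auto
    have "b [^] n = w"
      using regular_elem_cancel[OF regular_elem_nat_pow[OF x(2)], of "b [^] n" w k] w(2) wc bc xkc
      by (simp add: m_comm)
    then have "b [^] n \<in> ideal_pow R I (min (n + k - Na) n)"
      using w(1) ideal_pow_antimono[OF I] by (metis min.cobounded1 subsetD)
    moreover have "Nh + k \<le> min (n + k - Na) n" using n by simp
    ultimately show ?thesis
      using Nh[of "min (n + k - Na) n" n] bn by (auto simp: add.commute)
  qed
  then show ?thesis by blast
qed

end

section \<open>Weak subintegrality\<close>

function cancelling_coeff :: "nat \<Rightarrow> nat \<Rightarrow> int" where
  "cancelling_coeff q n =
     (if n \<le> q then 0 else -1 - (\<Sum>i \<in> {q<..<n}. int (n choose i) * cancelling_coeff q i))"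
  by auto
termination by (relation "measure (\<lambda>(q, n). n)") auto

declare cancelling_coeff.simps [simp del]

lemma cancelling_coeff_le: "n \<le> q \<Longrightarrow> cancelling_coeff q n = 0"
  by (simp add: cancelling_coeff.simps)

lemma sum_cancelling_coeff:
  assumes "q < n"
  shows "(\<Sum>i \<in> {1..n}. int (n choose i) * cancelling_coeff q i) = -1"
proof -
  have "(\<Sum>i \<in> {1..n}. int (n choose i) * cancelling_coeff q i) =
        (\<Sum>i \<in> {q<..n}. int (n choose i) * cancelling_coeff q i)"
    by (rule sum.mono_neutral_right) (auto simp: cancelling_coeff_le)
  also have "\<dots> = (\<Sum>i \<in> {q<..<n}. int (n choose i) * cancelling_coeff q i) + cancelling_coeff q n"
  proof -
    have "{q<..n} = insert n {q<..<n}" using assms by auto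
    then show ?thesis by simp
  qed
  also have "\<dots> = -1" using assms by (subst (2) cancelling_coeff.simps) simp
  finally show ?thesis .
qed

context cring
begin

lemma finsum_add_pow_int:
  assumes "finite A" "y \<in> carrier R"
  shows "(\<Oplus>i \<in> A. add_pow R (k i) y) = add_pow R ((\<Sum>i \<in> A. k i) :: int) y"
  using assms(1)
proof (induction A rule: finite_induct)
  case empty
  then show ?case using assms(2) by (simp add: add_pow_def)
next
  case (insert a A)
  then show ?case
    using assms(2) add.int_pow_mult[OF assms(2), of "k a" "\<Sum>i \<in> A. k i"] by (simp add: Pi_def)
qed

lemma cancelling_coeff_relation:
  assumes b: "b \<in> carrier R" and n: "q < n"
  shows "b [^] n \<oplus> (\<Oplus>i \<in> {1..n}.
           add_pow R (n choose i) (add_pow R (cancelling_coeff q i) (b [^] i) \<otimes> b [^] (n - i))) = \<zero>"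
proof -
  let ?y = "b [^] n"
  have y: "?y \<in> carrier R" using b by simp
  have summand: "add_pow R (n choose i) (add_pow R (cancelling_coeff q i) (b [^] i) \<otimes> b [^] (n - i))
                   = add_pow R (int (n choose i) * cancelling_coeff q i) ?y"
    if "i \<in> {1..n}" for i
  proof -
    have "add_pow R (cancelling_coeff q i) (b [^] i) \<otimes> b [^] (n - i) = add_pow R (cancelling_coeff q i) ?y"
      using b that by (simp add: add_pow_ldistr_int nat_pow_mult)
    then show ?thesis
      using add.int_pow_pow[OF y] int_pow_int[symmetric, of "add_monoid R"]
      by (simp add: add_pow_def mult.commute)
  qed
  have "(\<Oplus>i \<in> {1..n}. add_pow R (n choose i) (add_pow R (cancelling_coeff q i) (b [^] i) \<otimes> b [^] (n - i)))
        = (\<Oplus>i \<in> {1..n}. add_pow R (int (n choose i) * cancelling_coeff q i) ?y)"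
    by (rule add.finprod_cong') (use summand y in auto)
  also have "\<dots> = add_pow R (- 1 :: int) ?y"
    using finsum_add_pow_int[OF _ y, of "{1..n}" "\<lambda>i. int (n choose i) * cancelling_coeff q i"]
      sum_cancelling_coeff[OF n] by simp
  finally have sum: "(\<Oplus>i \<in> {1..n}.
      add_pow R (n choose i) (add_pow R (cancelling_coeff q i) (b [^] i) \<otimes> b [^] (n - i)))
      = add_pow R (- 1 :: int) ?y" .
  have "?y \<oplus> add_pow R (- 1 :: int) ?y = add_pow R (1 + - 1 :: int) ?y"
    using add.int_pow_mult[OF y, of 1 "- 1"] y by simp
  then show ?thesis using sum by (simp add: add_pow_def)
qed

lemma weakly_subintegral_of_nat_pow:
  assumes I: "ideal I R" and b: "b \<in> carrier R"
    and powers: "\<And>n. q < n \<Longrightarrow> b [^] n \<in> ideal_pow R I n"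
  shows "weakly_subintegral R I b"
proof -
  define a where "a i = add_pow R (cancelling_coeff q i) (b [^] i)" for i
  have a: "a i \<in> ideal_pow R I i" for i
  proof (cases "i \<le> q")
    case True
    then show ?thesis
      using additive_subgroup.zero_closed[OF ideal.axioms(1)[OF ideal_pow_is_ideal[OF I]]]
      by (simp add: a_def cancelling_coeff_le add_pow_def)
  next
    case False
    then show ?thesis
      unfolding a_def using powers[of i] add.subgroup_int_pow_closed[OF
        additive_subgroup.a_subgroup[OF ideal.axioms(1)[OF ideal_pow_is_ideal[OF I]]]]
      by simp
  qed
  show ?thesis
    unfolding weakly_subintegral_def using b a cancelling_coeff_relation[OF b]
    by (intro conjI exI[of _ q] exI[of _ a]) (auto simp: a_def)
qed

end

theorem mainTheorem11:
  fixes R (structure) and I :: "'a set"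
  assumes "cring R" and "noetherian_ring R" and "ideal I R"
    and "\<exists>x \<in> I. regular_elem R x"
  shows "ratliff_rush R I \<subseteq> weak_subintegral_closure R I"
proof
  interpret noetherian_cring R by (intro noetherian_cring.intro assms(1,2))
  fix b assume "b \<in> ratliff_rush R I"
  then obtain k where b: "b \<in> ideal_colon R (ideal_pow R I (Suc k)) (ideal_pow R I k)"
    unfolding ratliff_rush_def ideal_colon_def by blast
  obtain x where x: "x \<in> I" "regular_elem R x" using assms(4) by blast
  obtain n0 where "\<And>n. n0 \<le> n \<Longrightarrow> b [^] n \<in> ideal_pow R I n"
    using ratliff_rush_eventually_nat_pow[OF assms(3) x b] by blast
  then have "weakly_subintegral R I b"
    using b by (intro weakly_subintegral_of_nat_pow[OF assms(3), of _ n0]) (auto simp: ideal_colon_def)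
  then show "b \<in> weak_subintegral_closure R I"
    by (simp add: weak_subintegral_closure_def weakly_subintegral_def)
qed

end
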